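(* Let $P$ be a finite poset and $\mathcal{J}\subseteq\mathrm{Hom}(P,\mathbb{N})$ a poset ideal. The set of minimal markers for $\mathcal{J}$ is finite.
   Context: $\mathbb{N}=\{0,1,2,\dots\}$; $\mathrm{Hom}(P,\mathbb{N})$ is the set of isotone maps $P\to\mathbb{N}$ ordered pointwise; a poset ideal is a down-closed subset. A marker for $\mathcal{J}$ is a pair of a poset ideal $I\subseteq P$ and an isotone map $\alpha:I\to\mathbb{N}$ such that every isotone $\phi:P\to\mathbb{N}$ with $\phi|_I=\alpha$ belongs to $\mathcal{J}$. It is a minimal marker if for no poset ideal $I'\subsetneq I$ is the restriction $\alpha|_{I'}$ a marker for $\mathcal{J}$. *)

theory Defs
  imports Main
begin

text \<open>A finite poset is modelled as a finite subset P of a type with a partial order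
  (the induced order). Maps P \<rightarrow> nat (resp. I \<rightarrow> nat) are represented as total functions
  that are 0 outside their domain, so that pointwise order and equality are the intended ones.\<close>

definition restr :: "'a set \<Rightarrow> ('a \<Rightarrow> nat) \<Rightarrow> 'a \<Rightarrow> nat" where
  "restr I f = (\<lambda>x. if x \<in> I then f x else 0)"

definition isotone_on :: "'a::order set \<Rightarrow> ('a \<Rightarrow> nat) \<Rightarrow> bool" where
  "isotone_on S f \<longleftrightarrow> (\<forall>x\<in>S. \<forall>y\<in>S. x \<le> y \<longrightarrow> f x \<le> f y)"

definition Hom :: "'a::order set \<Rightarrow> ('a \<Rightarrow> nat) set" where
  "Hom S = {f. isotone_on S f \<and> (\<forall>x. x \<notin> S \<longrightarrow> f x = 0)}"

definition poset_ideal :: "'a::order set \<Rightarrow> 'a set \<Rightarrow> bool" where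
  "poset_ideal P I \<longleftrightarrow> I \<subseteq> P \<and> (\<forall>x\<in>I. \<forall>y\<in>P. y \<le> x \<longrightarrow> y \<in> I)"

definition hom_ideal :: "'a::order set \<Rightarrow> ('a \<Rightarrow> nat) set \<Rightarrow> bool" where
  "hom_ideal P J \<longleftrightarrow> J \<subseteq> Hom P \<and> (\<forall>\<phi>\<in>J. \<forall>\<psi>\<in>Hom P. \<psi> \<le> \<phi> \<longrightarrow> \<psi> \<in> J)"

definition marker :: "'a::order set \<Rightarrow> ('a \<Rightarrow> nat) set \<Rightarrow> 'a set \<Rightarrow> ('a \<Rightarrow> nat) \<Rightarrow> bool" where
  "marker P J I \<alpha> \<longleftrightarrow> poset_ideal P I \<and> \<alpha> \<in> Hom I \<and>
     (\<forall>\<phi>\<in>Hom P. restr I \<phi> = \<alpha> \<longrightarrow> \<phi> \<in> J)"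

definition minimal_marker :: "'a::order set \<Rightarrow> ('a \<Rightarrow> nat) set \<Rightarrow> 'a set \<Rightarrow> ('a \<Rightarrow> nat) \<Rightarrow> bool" where
  "minimal_marker P J I \<alpha> \<longleftrightarrow> marker P J I \<alpha> \<and>
     (\<forall>I'. poset_ideal P I' \<and> I' \<subset> I \<longrightarrow> \<not> marker P J I' (restr I' \<alpha>))"

end

theory Submission
  imports Defs "HOL-Library.Infinite_Set"
begin

text \<open>By Dickson's lemma the maps in \<open>Hom P - J\<close> that are minimal for the pointwise order
  are finitely many, so their values are bounded by some \<open>B\<close>, and every map outside \<open>J\<close>
  lies above a map outside \<open>J\<close> with all values below \<open>B\<close>. A marker \<open>(I, \<alpha>)\<close> with a value
  \<open>\<alpha> x \<ge> B\<close> is then not minimal: restricting \<open>\<alpha>\<close> to the ideal \<open>{x \<in> I. \<alpha> x < B}\<close> still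
  gives a marker. So minimal markers take values below \<open>B\<close>, and over the finite set \<open>P\<close> there
  are only finitely many such pairs.\<close>

lemma infinite_subset_mono_nat:
  fixes h :: "nat \<Rightarrow> nat"
  assumes "infinite S"
  shows "\<exists>S'\<subseteq>S. infinite S' \<and> (\<forall>i\<in>S'. \<forall>j\<in>S'. i < j \<longrightarrow> h i \<le> h j)"
proof (cases "finite {i\<in>S. \<forall>j\<in>S. i < j \<longrightarrow> h i \<le> h j}")
  case False
  then show ?thesis by (intro exI[of _ "{i\<in>S. \<forall>j\<in>S. i < j \<longrightarrow> h i \<le> h j}"]) auto
next
  case True
  then obtain N where N: "{i\<in>S. \<forall>j\<in>S. i < j \<longrightarrow> h i \<le> h j} \<subseteq> {..<N}"
    using finite_nat_bounded by blast
  let ?T = "{i\<in>S. N \<le> i}"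
  have "S \<subseteq> ?T \<union> {..<N}" by auto
  then have "infinite ?T" using assms finite_subset by blast
  then obtain k where "k \<in> ?T" using infinite_imp_nonempty by blast
  then obtain i0 where i0: "i0 \<in> ?T" and least: "\<And>j. j \<in> ?T \<Longrightarrow> h i0 \<le> h j"
    using ex_has_least_nat[of "\<lambda>i. i \<in> ?T" k h] by blast
  \<comment> \<open>an index minimising \<open>h\<close> beyond \<open>N\<close> would lie in the set bounded by \<open>N\<close>\<close>
  have "i0 \<notin> {i\<in>S. \<forall>j\<in>S. i < j \<longrightarrow> h i \<le> h j}" using N i0 by auto
  then obtain j where "j \<in> S" "i0 < j" "h j < h i0" using i0 by auto
  with i0 least[of j] show ?thesis by simp
qed

lemma infinite_subset_pointwise_mono:
  fixes f :: "nat \<Rightarrow> 'a \<Rightarrow> nat"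
  assumes "finite P" and "infinite S"
  shows "\<exists>S'\<subseteq>S. infinite S' \<and> (\<forall>i\<in>S'. \<forall>j\<in>S'. i < j \<longrightarrow> (\<forall>x\<in>P. f i x \<le> f j x))"
  using assms
proof (induction P arbitrary: S rule: finite_induct)
  case empty
  then show ?case by blast
next
  case (insert a Q)
  obtain S1 where S1: "S1 \<subseteq> S" "infinite S1"
    "\<forall>i\<in>S1. \<forall>j\<in>S1. i < j \<longrightarrow> (\<forall>x\<in>Q. f i x \<le> f j x)"
    using insert.IH[OF insert.prems] by blast
  obtain S2 where S2: "S2 \<subseteq> S1" "infinite S2" "\<forall>i\<in>S2. \<forall>j\<in>S2. i < j \<longrightarrow> f i a \<le> f j a"
    using infinite_subset_mono_nat[OF S1(2), of "\<lambda>i. f i a"] by blast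
  show ?case using S1 S2 by (intro exI[of _ S2]) blast
qed

definition minimal_elements :: "('a \<Rightarrow> nat) set \<Rightarrow> ('a \<Rightarrow> nat) set" where
  "minimal_elements U = {g\<in>U. \<forall>h\<in>U. h \<le> g \<longrightarrow> h = g}"

lemma finite_minimal_elements:
  fixes U :: "('a \<Rightarrow> nat) set"
  assumes "finite P" and supp: "\<And>u x. u \<in> U \<Longrightarrow> x \<notin> P \<Longrightarrow> u x = 0"
  shows "finite (minimal_elements U)"
proof (rule ccontr)
  assume "infinite (minimal_elements U)"
  then obtain g :: "nat \<Rightarrow> _" where g: "inj g" "range g \<subseteq> minimal_elements U"
    using infinite_countable_subset by blast
  obtain S where S: "infinite S" "\<forall>i\<in>S. \<forall>j\<in>S. i < j \<longrightarrow> (\<forall>x\<in>P. g i x \<le> g j x)"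
    using infinite_subset_pointwise_mono[OF assms(1), of UNIV g] by auto
  obtain i where "i \<in> S" using infinite_imp_nonempty[OF S(1)] by blast
  moreover obtain j where "j \<in> S" "i < j"
    using S(1) unfolding infinite_nat_iff_unbounded by blast
  ultimately have ij: "i \<in> S" "j \<in> S" "i < j" by blast+
  have gi: "g i \<in> U" and gj: "g j \<in> minimal_elements U"
    using g(2) by (auto simp: minimal_elements_def)
  have "g i \<le> g j"
  proof (rule le_funI)
    fix x show "g i x \<le> g j x"
      using S(2) ij supp[OF gi, of x] by (cases "x \<in> P") auto
  qed
  then have "g i = g j" using gi gj by (auto simp: minimal_elements_def)
  then show False using g(1) ij(3) by (auto dest: injD)
qed

lemma exists_minimal_element_below:
  fixes U :: "('a \<Rightarrow> nat) set"
  assumes "finite P" and supp: "\<And>u x. u \<in> U \<Longrightarrow> x \<notin> P \<Longrightarrow> u x = 0" and "u \<in> U"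
  shows "\<exists>m\<in>minimal_elements U. m \<le> u"
proof -
  obtain m where m: "m \<in> U" "m \<le> u"
    and least: "\<And>v. v \<in> U \<Longrightarrow> v \<le> u \<Longrightarrow> (\<Sum>x\<in>P. m x) \<le> (\<Sum>x\<in>P. v x)"
    using ex_has_least_nat[of "\<lambda>v. v \<in> U \<and> v \<le> u" u "\<lambda>v. \<Sum>x\<in>P. v x"] assms(3) by blast
  have "h = m" if h: "h \<in> U" "h \<le> m" for h
  proof (rule ccontr)
    assume "h \<noteq> m"
    then obtain x where x: "h x \<noteq> m x" by auto
    then have "x \<in> P" using supp h(1) m(1) by metis
    moreover have "h x < m x" using x le_funD[OF h(2), of x] by simp
    ultimately have "(\<Sum>x\<in>P. h x) < (\<Sum>x\<in>P. m x)"
      using sum_strict_mono_ex1[OF assms(1), of h m] h(2) by (auto simp: le_fun_def)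
    moreover have "h \<le> u" using h(2) m(2) by auto
    ultimately show False using least h(1) by fastforce
  qed
  then show ?thesis using m by (auto simp: minimal_elements_def)
qed

lemma Hom_zero_outside: "f \<in> Hom S \<Longrightarrow> x \<notin> S \<Longrightarrow> f x = 0"
  by (simp add: Hom_def)

lemma finite_imp_bounded_values:
  fixes F :: "('a \<Rightarrow> nat) set"
  assumes "finite P" and "\<And>f x. f \<in> F \<Longrightarrow> x \<notin> P \<Longrightarrow> f x = 0" and "finite F"
  shows "\<exists>B. \<forall>f\<in>F. \<forall>x. f x < B"
proof
  show "\<forall>f\<in>F. \<forall>x. f x < Suc (\<Sum>f\<in>F. \<Sum>x\<in>P. f x)"
  proof (intro ballI allI)
    fix f x assume f: "f \<in> F"
    show "f x < Suc (\<Sum>f\<in>F. \<Sum>x\<in>P. f x)"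
    proof (cases "x \<in> P")
      case True
      have "f x \<le> (\<Sum>x\<in>P. f x)" using True assms(1) by (intro member_le_sum) auto
      also have "\<dots> \<le> (\<Sum>f\<in>F. \<Sum>x\<in>P. f x)" using f assms(3) by (intro member_le_sum) auto
      finally show ?thesis by simp
    qed (use assms(2)[OF f] in simp)
  qed
qed

definition bounds_complement :: "'a::order set \<Rightarrow> ('a \<Rightarrow> nat) set \<Rightarrow> nat \<Rightarrow> bool" where
  "bounds_complement P J B \<longleftrightarrow>
     (\<forall>\<phi>\<in>Hom P - J. \<exists>\<psi>\<in>Hom P - J. \<psi> \<le> \<phi> \<and> (\<forall>x. \<psi> x < B))"

lemma exists_bounds_complement:
  assumes "finite P"
  shows "\<exists>B. bounds_complement P J B"
proof -
  let ?M = "minimal_elements (Hom P - J)"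
  have supp: "\<And>u x. u \<in> Hom P - J \<Longrightarrow> x \<notin> P \<Longrightarrow> u x = 0" by (simp add: Hom_def)
  have "finite ?M"
    using assms supp by (rule finite_minimal_elements)
  moreover have "\<And>m x. m \<in> ?M \<Longrightarrow> x \<notin> P \<Longrightarrow> m x = 0"
    using supp by (auto simp: minimal_elements_def)
  ultimately obtain B where B: "\<forall>m\<in>?M. \<forall>x. m x < B"
    using finite_imp_bounded_values[OF assms] by blast
  have "\<exists>\<psi>\<in>Hom P - J. \<psi> \<le> \<phi> \<and> (\<forall>x. \<psi> x < B)" if \<phi>: "\<phi> \<in> Hom P - J" for \<phi>
  proof -
    obtain m where "m \<in> ?M" "m \<le> \<phi>"
      using exists_minimal_element_below assms supp \<phi> by blast
    with B show ?thesis by (auto simp: minimal_elements_def)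
  qed
  then show ?thesis by (auto simp: bounds_complement_def)
qed

lemma poset_ideal_sublevel:
  assumes "poset_ideal P I" and "isotone_on I \<alpha>"
  shows "poset_ideal P {x\<in>I. \<alpha> x < B}"
  using assms unfolding poset_ideal_def isotone_on_def by (blast intro: le_less_trans)

lemma Hom_glue:
  assumes "poset_ideal P I" and "\<alpha> \<in> Hom I" and "\<psi> \<in> Hom P" and "\<And>x. x \<in> I \<Longrightarrow> \<alpha> x \<le> c"
  shows "restr P (\<lambda>y. if y \<in> I then \<alpha> y else \<psi> y + c) \<in> Hom P"
  using assms unfolding Hom_def isotone_on_def poset_ideal_def restr_def
  by (auto intro: trans_le_add2)

lemma restr_glue:
  assumes "poset_ideal P I" and "\<alpha> \<in> Hom I"
  shows "restr I (restr P (\<lambda>y. if y \<in> I then \<alpha> y else g y)) = \<alpha>"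
  using assms unfolding Hom_def poset_ideal_def restr_def by (intro ext) auto

text \<open>A map \<open>\<psi> \<notin> J\<close> below a counterexample \<open>\<phi>\<close> would lie below the extension of \<open>\<alpha>\<close>
  by \<open>\<psi> + c\<close>, which is in \<open>J\<close> because \<open>(I, \<alpha>)\<close> is a marker; on \<open>I\<close> minus the sublevel set
  this uses \<open>\<psi> < B \<le> \<alpha>\<close>.\<close>
lemma marker_restrict_sublevel:
  assumes "finite P" and "hom_ideal P J" and "marker P J I \<alpha>"
    and B: "bounds_complement P J B"
  shows "marker P J {x\<in>I. \<alpha> x < B} (restr {x\<in>I. \<alpha> x < B} \<alpha>)"
proof -
  let ?I' = "{x\<in>I. \<alpha> x < B}"
  have I: "poset_ideal P I" and \<alpha>: "\<alpha> \<in> Hom I" and ext: "\<And>\<phi>. \<phi> \<in> Hom P \<Longrightarrow> restr I \<phi> = \<alpha> \<Longrightarrow> \<phi> \<in> J"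
    using assms(3) by (auto simp: marker_def)
  have "finite I" using I assms(1) finite_subset by (auto simp: poset_ideal_def)
  have "\<phi> \<in> J" if \<phi>: "\<phi> \<in> Hom P" "restr ?I' \<phi> = restr ?I' \<alpha>" for \<phi>
  proof (rule ccontr)
    assume "\<phi> \<notin> J"
    then obtain \<psi> where \<psi>: "\<psi> \<in> Hom P" "\<psi> \<notin> J" "\<psi> \<le> \<phi>" "\<forall>x. \<psi> x < B"
      using B \<phi>(1) by (auto simp: bounds_complement_def)
    define \<chi> where "\<chi> = restr P (\<lambda>y. if y \<in> I then \<alpha> y else \<psi> y + sum \<alpha> I)"
    have "\<chi> \<in> J"
      using Hom_glue[OF I \<alpha> \<psi>(1)] member_le_sum[OF _ _ \<open>finite I\<close>, of _ \<alpha>]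
        restr_glue[OF I \<alpha>] ext unfolding \<chi>_def by auto
    moreover have "\<psi> x \<le> \<chi> x" for x
    proof (cases "x \<in> I")
      case True
      have "\<psi> x \<le> \<alpha> x"
      proof (cases "\<alpha> x < B")
        case True
        then have "\<phi> x = \<alpha> x" using fun_cong[OF \<phi>(2), of x] \<open>x \<in> I\<close> by (simp add: restr_def)
        then show ?thesis using le_funD[OF \<psi>(3), of x] by simp
      next
        case False
        then show ?thesis using \<psi>(4) less_imp_le_nat[of "\<psi> x" B] by simp
      qed
      then show ?thesis using True I unfolding \<chi>_def restr_def poset_ideal_def by auto
    qed (use Hom_zero_outside[OF \<psi>(1), of x] in \<open>auto simp: \<chi>_def restr_def\<close>)
    ultimately have "\<psi> \<in> J" using assms(2) \<psi>(1) by (auto simp: hom_ideal_def le_fun_def)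
    with \<psi>(2) show False ..
  qed
  moreover have "restr ?I' \<alpha> \<in> Hom ?I'"
    using \<alpha> unfolding Hom_def isotone_on_def restr_def by auto
  moreover have "isotone_on I \<alpha>" using \<alpha> by (simp add: Hom_def)
  ultimately show ?thesis using poset_ideal_sublevel[OF I] by (auto simp: marker_def)
qed

lemma minimal_marker_bounded:
  assumes "finite P" and "hom_ideal P J" and "minimal_marker P J I \<alpha>"
    and B: "bounds_complement P J B"
    and "x \<in> I"
  shows "\<alpha> x < B"
proof (rule ccontr)
  assume "\<not> \<alpha> x < B"
  have mk: "marker P J I \<alpha>" using assms(3) by (simp add: minimal_marker_def)
  have "{y\<in>I. \<alpha> y < B} \<subset> I" using \<open>\<not> \<alpha> x < B\<close> \<open>x \<in> I\<close> by blast
  moreover have "poset_ideal P {y\<in>I. \<alpha> y < B}"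
    using mk poset_ideal_sublevel by (auto simp: marker_def Hom_def)
  ultimately show False
    using assms(3) marker_restrict_sublevel[OF assms(1,2) mk B] by (auto simp: minimal_marker_def)
qed

theorem proposition1p8:
  fixes P :: "'a::order set" and J :: "('a \<Rightarrow> nat) set"
  assumes "finite P" and "hom_ideal P J"
  shows "finite {(I, \<alpha>). minimal_marker P J I \<alpha>}"
proof -
  obtain B where B: "bounds_complement P J B"
    using exists_bounds_complement[OF assms(1)] by blast
  let ?F = "{f. \<forall>x. (x \<in> P \<longrightarrow> f x \<in> {..B}) \<and> (x \<notin> P \<longrightarrow> f x = 0)}"
  have "{(I, \<alpha>). minimal_marker P J I \<alpha>} \<subseteq> Pow P \<times> ?F"
  proof clarify
    fix I \<alpha> assume mm: "minimal_marker P J I \<alpha>"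
    have "I \<subseteq> P" and zero: "\<And>x. x \<notin> I \<Longrightarrow> \<alpha> x = 0"
      using mm by (auto simp: minimal_marker_def marker_def poset_ideal_def Hom_def)
    moreover have "\<alpha> x \<le> B" for x
      using minimal_marker_bounded[OF assms mm B, of x] zero[of x] by (cases "x \<in> I") simp_all
    ultimately show "I \<in> Pow P \<and> \<alpha> \<in> ?F" by auto
  qed
  moreover have "finite (Pow P \<times> ?F)"
    using assms(1) finite_set_of_finite_funs[OF assms(1), of "{..B}" 0] by auto
  ultimately show ?thesis by (rule finite_subset)
qed

end
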